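(* Let $G$ be a connected nontrivial graph with $m$ vertices and let $n\geq3$. If $\min\{3n\lambda(G),\ 2(m+2e(G))\}\geq 6\delta(G)+2$, then $G\boxtimes C_n$ is maximally restricted edge-connected, i.e. $\lambda'(G\boxtimes C_n)=\xi(G\boxtimes C_n)$.
   Context: All graphs are finite, simple and undirected; "nontrivial" means having at least two vertices. $C_n$ denotes the cycle on $n$ vertices. For a graph $G$: $e(G)=|E(G)|$; $\delta(G)$ is the minimum degree; $\lambda(G)$ is the edge-connectivity; for an edge $uv$, its edge-degree is $d_G(u)+d_G(v)-2$, and $\xi(G)$ is the minimum edge-degree over all edges. A restricted edge-cut of a connected graph $G$ is a set $S\subseteq E(G)$ such that $G-S$ is disconnected and every component of $G-S$ has at least $2$ vertices; $\lambda'(G)$ is the minimum cardinality of a restricted edge-cut. A graph $G$ is maximally restricted edge-connected if $\lambda'(G)=\xi(G)$. The strong product $G\boxtimes H$ has vertex set $V(G)\times V(H)$, with $(x_1,y_1)$ and $(x_2,y_2)$ adjacent iff either $x_1=x_2$ and $y_1y_2\in E(H)$, or $y_1=y_2$ and $x_1x_2\in E(G)$, or $x_1x_2\in E(G)$ and $y_1y_2\in E(H)$. (One has $\xi(G\boxtimes C_n)=6\delta(G)+2$.) *)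

theory Defs
  imports Main
begin

type_synonym 'a ugraph = "'a set \<times> 'a set set"

definition verts :: "'a ugraph \<Rightarrow> 'a set" where "verts G = fst G"
definition edges :: "'a ugraph \<Rightarrow> 'a set set" where "edges G = snd G"

definition graph :: "'a ugraph \<Rightarrow> bool" where
  "graph G \<longleftrightarrow> finite (verts G) \<and>
     (\<forall>e\<in>edges G. \<exists>u v. e = {u, v} \<and> u \<noteq> v \<and> u \<in> verts G \<and> v \<in> verts G)"

definition adj :: "'a ugraph \<Rightarrow> ('a \<times> 'a) set" where
  "adj G = {(u, v). {u, v} \<in> edges G}"

definition connected :: "'a ugraph \<Rightarrow> bool" where
  "connected G \<longleftrightarrow> verts G \<noteq> {} \<and>
     (\<forall>u\<in>verts G. \<forall>v\<in>verts G. (u, v) \<in> (adj G)\<^sup>*)"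

definition degree :: "'a ugraph \<Rightarrow> 'a \<Rightarrow> nat" where
  "degree G v = card {e \<in> edges G. v \<in> e}"

definition min_degree :: "'a ugraph \<Rightarrow> nat" where
  "min_degree G = Min (degree G ` verts G)"

definition edge_conn :: "'a ugraph \<Rightarrow> nat" where
  "edge_conn G = Inf {card S | S. S \<subseteq> edges G \<and> \<not> connected (verts G, edges G - S)}"

text \<open>Restricted edge-cut: G - S disconnected and every component of G - S
  has at least 2 vertices.\<close>
definition restricted_edge_cut :: "'a ugraph \<Rightarrow> 'a set set \<Rightarrow> bool" where
  "restricted_edge_cut G S \<longleftrightarrow> S \<subseteq> edges G \<and> \<not> connected (verts G, edges G - S) \<and>
     (\<forall>v\<in>verts G. \<exists>u\<in>verts G. u \<noteq> v \<and> (v, u) \<in> (adj (verts G, edges G - S))\<^sup>*)"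

text \<open>lambda'(G); Inf of the empty nat set is 0 (only relevant if no restricted cut exists).\<close>
definition restricted_edge_conn :: "'a ugraph \<Rightarrow> nat" where
  "restricted_edge_conn G = Inf {card S | S. restricted_edge_cut G S}"

definition min_edge_degree :: "'a ugraph \<Rightarrow> nat" where
  "min_edge_degree G = Min {degree G u + degree G v - 2 | u v. {u, v} \<in> edges G \<and> u \<noteq> v}"

definition max_restricted_edge_connected :: "'a ugraph \<Rightarrow> bool" where
  "max_restricted_edge_connected G \<longleftrightarrow> restricted_edge_conn G = min_edge_degree G"

definition cycle :: "nat \<Rightarrow> nat ugraph" where
  "cycle n = ({0..<n}, {{i, Suc i mod n} | i. i < n})"

definition strong_product :: "'a ugraph \<Rightarrow> 'b ugraph \<Rightarrow> ('a \<times> 'b) ugraph" where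
  "strong_product G H = (verts G \<times> verts H,
     {{(x1, y1), (x2, y2)} | x1 y1 x2 y2.
        x1 \<in> verts G \<and> x2 \<in> verts G \<and> y1 \<in> verts H \<and> y2 \<in> verts H \<and>
        ((x1 = x2 \<and> {y1, y2} \<in> edges H) \<or>
         (y1 = y2 \<and> {x1, x2} \<in> edges G) \<or>
         ({x1, x2} \<in> edges G \<and> {y1, y2} \<in> edges H))})"

end

theory Submission
  imports Defs
begin

(* Let H = G \<boxtimes> C_n and call {x} \<times> C_n the column of a vertex x of G.  Deleting the edges
   around an edge of minimum edge degree is a restricted edge-cut, and a vertical edge shows
   \<xi>(H) \<le> 6\<delta>(G) + 2.  Conversely every restricted edge-cut contains the boundary of a vertex
   set X such that neither X nor its complement has an isolated vertex, and we show that this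
   boundary has at least 6\<delta>(G) + 2 edges, grouping boundary edges by their projection to G.
   If one column lies in X and another one misses X, then for every i the vertex sets
   X_i, X_i \<inter> X_(i+1), X_i \<union> X_(i+1) of G (X_i the i-th layer of X) separate these two vertices,
   and over each edge of G the boundary of X has at least as many edges as these three cuts
   together; this gives 3n\<lambda>(G) \<ge> 6\<delta>(G) + 2 edges.  Otherwise, up to complementation, every
   column meets the complement of X; then a column meeting X carries at least 2 boundary edges,
   and comparing two cyclic 0/1-sequences shows that at least 3 boundary edges lie over every
   edge of G at such a column (4 if both columns meet X, 6 if the other column misses X while
   this one meets X twice).  Summing over the edges at one or two such columns gives the bound. *)

section \<open>Cyclic sequences\<close>

definition cyc_succ :: "nat \<Rightarrow> nat \<Rightarrow> nat" where
  "cyc_succ n i = (if Suc i < n then Suc i else 0)"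

definition cyc_pred :: "nat \<Rightarrow> nat \<Rightarrow> nat" where
  "cyc_pred n i = (if i = 0 then n - 1 else i - 1)"

lemma cyc_succ_eq_Suc_mod: "i < n \<Longrightarrow> cyc_succ n i = Suc i mod n"
  unfolding cyc_succ_def by (cases "Suc i = n") auto

lemma cyc_succ_less: "0 < n \<Longrightarrow> cyc_succ n i < n"
  by (simp add: cyc_succ_def)

lemma cyc_pred_less: "i < n \<Longrightarrow> cyc_pred n i < n"
  by (auto simp: cyc_pred_def)

lemma cyc_succ_pred: "i < n \<Longrightarrow> cyc_succ n (cyc_pred n i) = i"
  by (auto simp: cyc_succ_def cyc_pred_def)

lemma cyc_pred_succ: "i < n \<Longrightarrow> cyc_pred n (cyc_succ n i) = i"
  by (auto simp: cyc_succ_def cyc_pred_def)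

lemma cyc_succ_neq: "1 < n \<Longrightarrow> i < n \<Longrightarrow> cyc_succ n i \<noteq> i"
  by (auto simp: cyc_succ_def)

lemma cyc_pred_neq: "1 < n \<Longrightarrow> i < n \<Longrightarrow> cyc_pred n i \<noteq> i"
  by (auto simp: cyc_pred_def)

lemma cyc_succ_succ_neq: "2 < n \<Longrightarrow> i < n \<Longrightarrow> cyc_succ n (cyc_succ n i) \<noteq> i"
  by (auto simp: cyc_succ_def)

lemma cyc_pred_neq_succ: "2 < n \<Longrightarrow> i < n \<Longrightarrow> cyc_pred n i \<noteq> cyc_succ n i"
  by (auto simp: cyc_succ_def cyc_pred_def)

lemma verts_cycle: "verts (cycle n) = {..<n}"
  by (auto simp: cycle_def verts_def)

lemma edge_cycle_iff:
  assumes "0 < n"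
  shows "{i, j} \<in> edges (cycle n) \<longleftrightarrow> i < n \<and> j < n \<and> (j = cyc_succ n i \<or> i = cyc_succ n j)"
proof -
  have "{i, j} \<in> edges (cycle n) \<longleftrightarrow> (\<exists>k<n. {i, j} = {k, cyc_succ n k})"
    by (force simp: cycle_def edges_def cyc_succ_eq_Suc_mod)
  also have "\<dots> \<longleftrightarrow> i < n \<and> j < n \<and> (j = cyc_succ n i \<or> i = cyc_succ n j)"
    using cyc_succ_less[OF assms] by (auto simp: doubleton_eq_iff)
  finally show ?thesis .
qed

(* For the column R of a vertex set X of G \<boxtimes> C_n over a vertex of G, cyc_changes n R counts the
   boundary edges of X inside the column; for the columns P, Q over adjacent vertices of G,
   cross_disagreements n P Q counts the boundary edges joining the two columns. *)
definition cyc_changes :: "nat \<Rightarrow> (nat \<Rightarrow> bool) \<Rightarrow> nat" where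
  "cyc_changes n R = (\<Sum>i<n. of_bool (R i \<noteq> R (cyc_succ n i)))"

definition cross_disagreements :: "nat \<Rightarrow> (nat \<Rightarrow> bool) \<Rightarrow> (nat \<Rightarrow> bool) \<Rightarrow> nat" where
  "cross_disagreements n P Q = (\<Sum>i<n. of_bool (P i \<noteq> Q (cyc_pred n i)) + of_bool (P i \<noteq> Q i)
                                      + of_bool (P i \<noteq> Q (cyc_succ n i)))"

lemma cyc_change_exists:
  assumes "a < n" "b < n" "R a" "\<not> R b"
  shows "\<exists>k<n. R k \<and> \<not> R (cyc_succ n k)"
proof (rule ccontr)
  assume "\<not> ?thesis"
  then have step: "R (cyc_succ n k)" if "k < n" "R k" for k
    using that by blast
  have "R ((a + m) mod n)" for m
  proof (induction m)
    case (Suc m)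
    have "(a + m) mod n < n" using assms(1) by simp
    then show ?case
      using step[OF _ Suc.IH] by (simp add: cyc_succ_eq_Suc_mod mod_Suc_eq)
  qed (use assms in simp)
  from this[of "b + n - a"] show False using assms by simp
qed

lemma two_le_sum_of_two:
  fixes f :: "'a \<Rightarrow> nat"
  assumes "finite A" "a \<in> A" "b \<in> A" "a \<noteq> b" "1 \<le> f a" "1 \<le> f b"
  shows "2 \<le> sum f A"
proof -
  have "sum f {a, b} \<le> sum f A" using assms by (intro sum_mono2) auto
  then show ?thesis using assms by simp
qed

lemma two_le_cyc_changes:
  assumes "a < n" "b < n" "R a" "\<not> R b"
  shows "2 \<le> cyc_changes n R"
proof -
  obtain k where "k < n" "R k" "\<not> R (cyc_succ n k)"
    using cyc_change_exists[OF assms] by blast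
  moreover obtain k' where "k' < n" "\<not> R k'" "R (cyc_succ n k')"
    using cyc_change_exists[of b n a "Not \<circ> R"] assms by auto
  ultimately show ?thesis
    unfolding cyc_changes_def by (intro two_le_sum_of_two[of _ k k']) auto
qed

lemma cross_disagreements_eq:
  "cross_disagreements n P Q =
     (\<Sum>i<n. of_bool (P (cyc_succ n i) \<noteq> Q i) + of_bool (P i \<noteq> Q (cyc_succ n i)))
     + (\<Sum>i<n. of_bool (P i \<noteq> Q i))"
proof -
  have "(\<Sum>i<n. of_bool (P i \<noteq> Q (cyc_pred n i)) :: nat) = (\<Sum>i<n. of_bool (P (cyc_succ n i) \<noteq> Q i))"
    by (rule sum.reindex_bij_witness[of _ "cyc_succ n" "cyc_pred n"])
       (auto simp: cyc_succ_pred cyc_pred_succ cyc_succ_less cyc_pred_less)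
  then show ?thesis
    unfolding cross_disagreements_def by (simp add: sum.distrib)
qed

lemma and_or_disagreements_le:
  "of_bool ((p \<and> q) \<noteq> (p' \<and> q')) + of_bool ((p \<or> q) \<noteq> (p' \<or> q'))
     \<le> (of_bool (p' \<noteq> q) + of_bool (p \<noteq> q') :: nat)"
  by (cases p; cases q; cases p'; cases q') auto

lemma cyc_changes_and_or_le_cross_disagreements:
  "cyc_changes n (\<lambda>i. P i \<and> Q i) + cyc_changes n (\<lambda>i. P i \<or> Q i) + (\<Sum>i<n. of_bool (P i \<noteq> Q i))
     \<le> cross_disagreements n P Q"
proof -
  have "cyc_changes n (\<lambda>i. P i \<and> Q i) + cyc_changes n (\<lambda>i. P i \<or> Q i)
      \<le> (\<Sum>i<n. of_bool (P (cyc_succ n i) \<noteq> Q i) + of_bool (P i \<noteq> Q (cyc_succ n i)))"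
    unfolding cyc_changes_def sum.distrib[symmetric]
    by (intro sum_mono and_or_disagreements_le)
  then show ?thesis by (simp add: cross_disagreements_eq)
qed

lemma layer_disagreements_le_cross_disagreements:
  "(\<Sum>i<n. of_bool (P i \<noteq> Q i)
      + of_bool ((P i \<and> P (cyc_succ n i)) \<noteq> (Q i \<and> Q (cyc_succ n i)))
      + of_bool ((P i \<or> P (cyc_succ n i)) \<noteq> (Q i \<or> Q (cyc_succ n i))))
   \<le> cross_disagreements n P Q"
proof -
  have "(\<Sum>i<n. of_bool ((P i \<and> P (cyc_succ n i)) \<noteq> (Q i \<and> Q (cyc_succ n i)))
      + of_bool ((P i \<or> P (cyc_succ n i)) \<noteq> (Q i \<or> Q (cyc_succ n i))))
      \<le> (\<Sum>i<n. of_bool (P (cyc_succ n i) \<noteq> Q i) + of_bool (P i \<noteq> Q (cyc_succ n i)) :: nat)"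
  proof (intro sum_mono)
    fix i
    show "of_bool ((P i \<and> P (cyc_succ n i)) \<noteq> (Q i \<and> Q (cyc_succ n i)))
        + of_bool ((P i \<or> P (cyc_succ n i)) \<noteq> (Q i \<or> Q (cyc_succ n i)))
        \<le> (of_bool (P (cyc_succ n i) \<noteq> Q i) + of_bool (P i \<noteq> Q (cyc_succ n i)) :: nat)"
      by (cases "P i"; cases "Q i"; cases "P (cyc_succ n i)"; cases "Q (cyc_succ n i)") auto
  qed
  then show ?thesis
    by (simp add: cross_disagreements_eq sum.distrib)
qed

lemma card_filter_triple:
  assumes "a \<noteq> b" "a \<noteq> c" "b \<noteq> c"
  shows "card {x \<in> {a, b, c}. R x} = of_bool (R a) + of_bool (R b) + of_bool (R c)"
proof -
  have "{x \<in> {a, b, c}. R x} =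
      (if R a then {a} else {}) \<union> (if R b then {b} else {}) \<union> (if R c then {c} else {})"
    by auto
  then show ?thesis
    using assms by (cases "R a"; cases "R b"; cases "R c") (simp_all add: card_insert_if)
qed

lemma cross_disagreements_empty:
  assumes "\<forall>j<n. \<not> Q j"
  shows "cross_disagreements n P Q = 3 * card {i. i < n \<and> P i}"
proof -
  have "cross_disagreements n P Q = (\<Sum>i<n. 3 * of_bool (P i))"
    unfolding cross_disagreements_def
    using assms cyc_pred_less[of _ n] cyc_succ_less[of n] by (intro sum.cong) auto
  also have "\<dots> = 3 * card {i. i < n \<and> P i}"
    by (simp add: sum_distrib_left[symmetric] lessThan_def Int_def)
  finally show ?thesis .
qed

lemma four_le_cross_disagreements_complement:
  assumes "3 \<le> n" and P: "\<forall>i<n. Q i \<longleftrightarrow> \<not> P i"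
  shows "4 \<le> cross_disagreements n P Q"
proof -
  have "(\<Sum>i<n. of_bool (P i \<noteq> Q i)) + (\<Sum>i<n. of_bool (P i \<noteq> Q (cyc_succ n i)))
      \<le> cross_disagreements n P Q"
    unfolding cross_disagreements_def sum.distrib[symmetric] by (intro sum_mono) simp
  moreover have "(\<Sum>i<n. of_bool (P i \<noteq> Q i) :: nat) = n"
    using P by simp
  moreover have "1 \<le> (\<Sum>i<n. of_bool (P i \<noteq> Q (cyc_succ n i)) :: nat)" if n3: "n = 3"
  proof -
    \<comment> \<open>a Boolean sequence cannot alternate around a cycle of odd length\<close>
    have "cyc_succ n 0 = 1" "cyc_succ n 1 = 2" "cyc_succ n 2 = 0"
      using n3 by (simp_all add: cyc_succ_def)
    then have "\<exists>i\<in>{0, 1, 2}. P i \<noteq> Q (cyc_succ n i)"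
      using P n3 by auto
    then obtain i where "i \<in> {0, 1, 2}" "P i \<noteq> Q (cyc_succ n i)"
      by blast
    moreover from this(1) have "i < n"
      using n3 by auto
    ultimately show ?thesis
      using member_le_sum[of i "{..<n}" "\<lambda>i. of_bool (P i \<noteq> Q (cyc_succ n i)) :: nat"] by simp
  qed
  ultimately show ?thesis
    using assms(1) by (cases "n = 3") auto
qed

lemma four_le_cross_disagreements:
  assumes "3 \<le> n" and P: "p < n" "P p" "p' < n" "\<not> P p'" and Q: "q < n" "Q q" "q' < n" "\<not> Q q'"
  shows "4 \<le> cross_disagreements n P Q"
proof -
  let ?D = "\<Sum>i<n. of_bool (P i \<noteq> Q i) :: nat"
  have bound: "cyc_changes n (\<lambda>i. P i \<and> Q i) + cyc_changes n (\<lambda>i. P i \<or> Q i) + ?D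
      \<le> cross_disagreements n P Q"
    by (rule cyc_changes_and_or_le_cross_disagreements)
  have two_le_D: "2 \<le> ?D" if "a < n" "b < n" "a \<noteq> b" "P a \<noteq> Q a" "P b \<noteq> Q b" for a b
    using that by (intro two_le_sum_of_two[of _ a b]) auto
  consider (and_or) c d where "c < n" "P c \<and> Q c" "d < n" "\<not> P d \<and> \<not> Q d"
    | (and_only) c where "c < n" "P c \<and> Q c" "\<forall>d<n. P d \<or> Q d"
    | (or_only) d where "d < n" "\<not> P d \<and> \<not> Q d" "\<forall>c<n. \<not> (P c \<and> Q c)"
    | (complement) "\<forall>i<n. Q i \<longleftrightarrow> \<not> P i"
    by blast
  then show ?thesis
  proof cases
    case and_or
    then have "2 \<le> cyc_changes n (\<lambda>i. P i \<and> Q i)" "2 \<le> cyc_changes n (\<lambda>i. P i \<or> Q i)"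
      by (auto intro: two_le_cyc_changes[of c _ d])
    then show ?thesis using bound by linarith
  next
    case and_only
    then have "2 \<le> cyc_changes n (\<lambda>i. P i \<and> Q i)"
      using P by (auto intro: two_le_cyc_changes[of c _ p'])
    moreover have "2 \<le> ?D"
      using and_only P Q by (intro two_le_D[of p' q']) auto
    ultimately show ?thesis using bound by linarith
  next
    case or_only
    then have "2 \<le> cyc_changes n (\<lambda>i. P i \<or> Q i)"
      using P by (auto intro: two_le_cyc_changes[of p _ d])
    moreover have "2 \<le> ?D"
      using or_only P Q by (intro two_le_D[of p q]) auto
    ultimately show ?thesis using bound by linarith
  next
    case complement
    show ?thesis by (rule four_le_cross_disagreements_complement[OF assms(1) complement])
  qed
qed

section \<open>Boundaries and restricted edge-cuts\<close>

lemma verts_pair [simp]: "verts (V, E) = V"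
  and edges_pair [simp]: "edges (V, E) = E"
  by (simp_all add: verts_def edges_def)

lemma graph_edge_endpoints:
  assumes "graph K" "{a, b} \<in> edges K"
  shows "a \<noteq> b" "a \<in> verts K" "b \<in> verts K"
  using assms unfolding graph_def by (metis doubleton_eq_iff)+

lemma graph_edgeE:
  assumes "graph K" "e \<in> edges K"
  obtains a b where "e = {a, b}" "a \<noteq> b" "a \<in> verts K" "b \<in> verts K"
  using assms unfolding graph_def by blast

lemma finite_verts: "graph K \<Longrightarrow> finite (verts K)"
  by (simp add: graph_def)

lemma finite_edges:
  assumes "graph K"
  shows "finite (edges K)"
proof -
  have "edges K \<subseteq> Pow (verts K)"
    using graph_edgeE[OF assms] by blast
  then show ?thesis
    using finite_verts[OF assms] by (simp add: finite_subset)
qed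

definition nbrs :: "'a ugraph \<Rightarrow> 'a \<Rightarrow> 'a set" where
  "nbrs K x = {y. {x, y} \<in> edges K}"

lemma nbrs_subset: "graph K \<Longrightarrow> nbrs K x \<subseteq> verts K"
  by (auto simp: nbrs_def dest: graph_edge_endpoints)

lemma finite_nbrs: "graph K \<Longrightarrow> finite (nbrs K x)"
  using nbrs_subset finite_verts finite_subset by metis

lemma self_notin_nbrs: "graph K \<Longrightarrow> x \<notin> nbrs K x"
  using graph_edge_endpoints(1)[of K x x] by (auto simp: nbrs_def)

lemma card_nbrs:
  assumes "graph K"
  shows "card (nbrs K x) = degree K x"
proof -
  have "bij_betw (\<lambda>y. {x, y}) (nbrs K x) {e \<in> edges K. x \<in> e}"
  proof (rule bij_betwI')
    show "\<exists>y\<in>nbrs K x. e = {x, y}" if e: "e \<in> {e \<in> edges K. x \<in> e}" for e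
    proof -
      obtain a b where "e = {a, b}"
        using e graph_edgeE[OF assms] by blast
      then show ?thesis
        using e by (auto simp: nbrs_def insert_commute)
    qed
  qed (auto simp: nbrs_def doubleton_eq_iff)
  then show ?thesis
    by (simp add: degree_def bij_betw_same_card)
qed

lemma min_degree_le: "graph K \<Longrightarrow> x \<in> verts K \<Longrightarrow> min_degree K \<le> degree K x"
  by (simp add: min_degree_def finite_verts)

lemma min_degree_attained:
  assumes "graph K" "verts K \<noteq> {}"
  obtains x where "x \<in> verts K" "degree K x = min_degree K"
proof -
  have "min_degree K \<in> degree K ` verts K"
    unfolding min_degree_def using assms by (simp add: finite_verts)
  then show ?thesis using that by auto
qed

lemma connected_nbrs_nonempty:
  assumes "connected K" "2 \<le> card (verts K)" "x \<in> verts K"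
  shows "nbrs K x \<noteq> {}"
proof -
  have "\<not> verts K \<subseteq> {x}"
  proof
    assume "verts K \<subseteq> {x}"
    then have "card (verts K) \<le> 1"
      using card_mono[of "{x}"] by fastforce
    then show False using assms(2) by simp
  qed
  then obtain y where "y \<in> verts K" "y \<noteq> x"
    by blast
  moreover have "(x, y) \<in> (adj K)\<^sup>*"
    using assms(1,3) \<open>y \<in> verts K\<close> unfolding connected_def by blast
  ultimately obtain z where "(x, z) \<in> adj K"
    by (metis converse_rtranclE)
  then show ?thesis
    by (auto simp: adj_def nbrs_def)
qed

lemma finite_edge_degrees:
  assumes "graph K"
  shows "finite {degree K u + degree K v - 2 | u v. {u, v} \<in> edges K \<and> u \<noteq> v}"
proof -
  have "{degree K u + degree K v - 2 | u v. {u, v} \<in> edges K \<and> u \<noteq> v}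
      \<subseteq> (\<lambda>(u, v). degree K u + degree K v - 2) ` (verts K \<times> verts K)"
    using graph_edge_endpoints[OF assms] by fastforce
  then show ?thesis
    using finite_verts[OF assms] by (meson finite_SigmaI finite_imageI finite_subset)
qed

lemma min_edge_degree_le:
  assumes "graph K" "{u, v} \<in> edges K"
  shows "min_edge_degree K \<le> degree K u + degree K v - 2"
  unfolding min_edge_degree_def
  using assms finite_edge_degrees[OF assms(1)] graph_edge_endpoints[OF assms]
  by (intro Min_le) auto

lemma min_edge_degree_attained:
  assumes "graph K" "edges K \<noteq> {}"
  obtains u v where "{u, v} \<in> edges K" "min_edge_degree K = degree K u + degree K v - 2"
proof -
  have "{degree K u + degree K v - 2 | u v. {u, v} \<in> edges K \<and> u \<noteq> v} \<noteq> {}"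
    using assms graph_edgeE[OF assms(1)] by blast
  then have "min_edge_degree K \<in> {degree K u + degree K v - 2 | u v. {u, v} \<in> edges K \<and> u \<noteq> v}"
    unfolding min_edge_degree_def using finite_edge_degrees[OF assms(1)] by (rule Min_in[rotated])
  then show ?thesis using that by blast
qed

definition boundary :: "'a ugraph \<Rightarrow> 'a set \<Rightarrow> 'a set set" where
  "boundary K X = {{a, b} | a b. a \<in> X \<and> b \<in> verts K - X \<and> {a, b} \<in> edges K}"

definition no_isolated_vertex :: "'a ugraph \<Rightarrow> 'a set \<Rightarrow> bool" where
  "no_isolated_vertex K X \<longleftrightarrow> (\<forall>p\<in>X. \<exists>q\<in>X. {p, q} \<in> edges K)"

lemma boundary_subset_edges: "boundary K X \<subseteq> edges K"
  by (auto simp: boundary_def)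

lemma finite_boundary: "graph K \<Longrightarrow> finite (boundary K X)"
  using finite_edges boundary_subset_edges finite_subset by metis

lemma edge_in_boundary_iff:
  assumes "graph K" "{a, b} \<in> edges K"
  shows "{a, b} \<in> boundary K X \<longleftrightarrow> (a \<in> X) \<noteq> (b \<in> X)"
proof
  show "(a \<in> X) \<noteq> (b \<in> X)" if "{a, b} \<in> boundary K X"
    using that by (auto simp: boundary_def doubleton_eq_iff)
next
  have ba: "{b, a} \<in> edges K"
    using assms(2) by (simp add: insert_commute)
  assume "(a \<in> X) \<noteq> (b \<in> X)"
  then have "{a, b} \<in> boundary K X \<or> {b, a} \<in> boundary K X"
    using assms ba graph_edge_endpoints[OF assms] unfolding boundary_def by blast
  then show "{a, b} \<in> boundary K X"
    by (auto simp: insert_commute)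
qed

lemma card_boundary_eq_sum:
  assumes "graph K"
  shows "card (boundary K X) = (\<Sum>e\<in>edges K. of_bool (e \<in> boundary K X))"
proof -
  have "{e \<in> edges K. e \<in> boundary K X} = boundary K X"
    using boundary_subset_edges by blast
  then show ?thesis
    using finite_edges[OF assms] by (simp add: Int_def)
qed

lemma boundary_Diff:
  assumes "graph K"
  shows "boundary K (verts K - X) = boundary K X"
proof (intro set_eqI iffI)
  fix e assume "e \<in> boundary K (verts K - X)"
  then obtain a b where "e = {a, b}" "{a, b} \<in> edges K" by (auto simp: boundary_def)
  then show "e \<in> boundary K X"
    using \<open>e \<in> boundary K (verts K - X)\<close> graph_edge_endpoints[OF assms] edge_in_boundary_iff[OF assms]
    by (metis Diff_iff)
next
  fix e assume "e \<in> boundary K X"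
  then obtain a b where "e = {a, b}" "{a, b} \<in> edges K" by (auto simp: boundary_def)
  then show "e \<in> boundary K (verts K - X)"
    using \<open>e \<in> boundary K X\<close> graph_edge_endpoints[OF assms] edge_in_boundary_iff[OF assms]
    by (metis Diff_iff)
qed

lemma reachable_stays_in:
  assumes "(u, v) \<in> (adj K)\<^sup>*" "u \<in> X" "\<And>a b. {a, b} \<in> edges K \<Longrightarrow> a \<in> X \<Longrightarrow> b \<in> X"
  shows "v \<in> X"
  using assms(1,2) by induction (auto simp: adj_def intro: assms(3))

lemma not_connected_remove_boundary:
  assumes "graph K" "u \<in> verts K \<inter> X" "w \<in> verts K - X"
  shows "\<not> connected (verts K, edges K - boundary K X)"
proof
  assume "connected (verts K, edges K - boundary K X)"
  then have "(u, w) \<in> (adj (verts K, edges K - boundary K X))\<^sup>*"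
    using assms unfolding connected_def by simp
  moreover have "b \<in> X" if "{a, b} \<in> edges (verts K, edges K - boundary K X)" "a \<in> X" for a b
    using that edge_in_boundary_iff[OF assms(1), of a b X] by simp
  ultimately have "w \<in> X"
    using assms(2) by (blast intro: reachable_stays_in)
  then show False using assms(3) by simp
qed

lemma edge_conn_le_card_boundary:
  assumes "graph K" "u \<in> verts K \<inter> X" "w \<in> verts K - X"
  shows "edge_conn K \<le> card (boundary K X)"
proof -
  have "card (boundary K X) \<in> {card S | S. S \<subseteq> edges K \<and> \<not> connected (verts K, edges K - S)}"
    using boundary_subset_edges not_connected_remove_boundary[OF assms] by blast
  then show ?thesis
    unfolding edge_conn_def by (rule cInf_lower) simp
qed

lemma rtrancl_adj_step_iff:
  assumes "(p, q) \<in> adj K"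
  shows "(u, p) \<in> (adj K)\<^sup>* \<longleftrightarrow> (u, q) \<in> (adj K)\<^sup>*"
proof -
  have "(q, p) \<in> adj K"
    using assms by (simp add: adj_def insert_commute)
  then show ?thesis
    using assms by (meson rtrancl_into_rtrancl)
qed

lemma restricted_edge_cut_adj:
  assumes "restricted_edge_cut K S" "p \<in> verts K"
  obtains q where "(p, q) \<in> adj (verts K, edges K - S)"
proof -
  obtain q where "q \<noteq> p" "(p, q) \<in> (adj (verts K, edges K - S))\<^sup>*"
    using assms unfolding restricted_edge_cut_def by auto
  then show ?thesis
    using that by (metis converse_rtranclE)
qed

lemma restricted_edge_cut_boundary:
  assumes "graph K" "verts K \<noteq> {}" and cut: "restricted_edge_cut K S"
  obtains X where "X \<subseteq> verts K" "X \<noteq> {}" "verts K - X \<noteq> {}" "boundary K X \<subseteq> S"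
    "no_isolated_vertex K X" "no_isolated_vertex K (verts K - X)"
proof -
  define R where "R = adj (verts K, edges K - S)"
  have R_iff: "(a, b) \<in> R \<longleftrightarrow> {a, b} \<in> edges K \<and> {a, b} \<notin> S" for a b
    by (simp add: R_def adj_def)
  obtain u v where uv: "u \<in> verts K" "v \<in> verts K" "(u, v) \<notin> R\<^sup>*"
    using cut assms(2) unfolding restricted_edge_cut_def connected_def R_def by auto
  define X where "X = {w \<in> verts K. (u, w) \<in> R\<^sup>*}"
  have same_side: "p \<in> X \<longleftrightarrow> q \<in> X" if "(p, q) \<in> R" for p q
  proof -
    have "(u, p) \<in> R\<^sup>* \<longleftrightarrow> (u, q) \<in> R\<^sup>*"
      using that rtrancl_adj_step_iff[of p q "(verts K, edges K - S)" u] by (simp add: R_def)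
    moreover have "p \<in> verts K" "q \<in> verts K"
      using that graph_edge_endpoints[OF assms(1)] by (auto simp: R_iff)
    ultimately show ?thesis
      by (simp add: X_def)
  qed
  have no_isolated: "\<exists>q\<in>Y. {p, q} \<in> edges K"
    if pY: "p \<in> Y" "Y = X \<or> Y = verts K - X" for p Y
  proof -
    obtain q where "(p, q) \<in> R"
      using restricted_edge_cut_adj[OF cut] pY unfolding R_def X_def by blast
    moreover from this have "q \<in> verts K" "{p, q} \<in> edges K"
      using graph_edge_endpoints[OF assms(1)] by (auto simp: R_iff)
    ultimately show ?thesis
      using pY same_side by blast
  qed
  have "boundary K X \<subseteq> S"
    using same_side R_iff by (auto simp: boundary_def)
  moreover have "u \<in> X" "v \<in> verts K - X"
    using uv by (auto simp: X_def)
  moreover have "no_isolated_vertex K X" "no_isolated_vertex K (verts K - X)"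
    using no_isolated unfolding no_isolated_vertex_def by blast+
  ultimately show ?thesis
    using that[of X] by (auto simp: X_def)
qed

lemma exists_nbr_notin_pair:
  assumes "graph K" "3 \<le> degree K v"
  obtains r where "r \<in> nbrs K v" "r \<notin> {p, q}"
proof -
  have "\<not> nbrs K v \<subseteq> {p, q}"
  proof
    assume "nbrs K v \<subseteq> {p, q}"
    then have "card (nbrs K v) \<le> card {p, q}"
      by (rule card_mono[rotated]) simp
    also have "\<dots> \<le> 2"
      by (simp add: card_insert_if)
    finally have "card (nbrs K v) \<le> 2" .
    then show False
      using assms by (simp add: card_nbrs)
  qed
  then show ?thesis using that by blast
qed

lemma card_boundary_edge_le:
  assumes "graph K" "{p, q} \<in> edges K"
  shows "card (boundary K {p, q}) \<le> degree K p + degree K q - 2"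
proof -
  define Ep where "Ep = {e \<in> edges K. p \<in> e}"
  define Eq where "Eq = {e \<in> edges K. q \<in> e}"
  have fin: "finite Ep" "finite Eq"
    unfolding Ep_def Eq_def using finite_edges[OF assms(1)] by auto
  have pq: "{p, q} \<in> Ep \<inter> Eq"
    using assms(2) by (simp add: Ep_def Eq_def)
  have "boundary K {p, q} \<subseteq> (Ep \<union> Eq) - {{p, q}}"
    by (auto simp: boundary_def Ep_def Eq_def)
  then have "card (boundary K {p, q}) \<le> card (Ep \<union> Eq) - 1"
    using fin pq card_mono[of "Ep \<union> Eq - {{p, q}}"] by (simp add: card_Diff_singleton)
  moreover have "1 \<le> card (Ep \<inter> Eq)"
    using pq fin by (metis Suc_le_eq card_gt_0_iff empty_iff finite_Int One_nat_def)
  ultimately show ?thesis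
    using card_Un_Int[OF fin] by (simp add: degree_def Ep_def[symmetric] Eq_def[symmetric])
qed

lemma restricted_edge_cut_boundary_edge:
  assumes "graph K" "{p, q} \<in> edges K" and deg: "\<forall>v\<in>verts K. 3 \<le> degree K v"
  shows "restricted_edge_cut K (boundary K {p, q})"
proof -
  let ?R = "adj (verts K, edges K - boundary K {p, q})"
  have pq: "p \<noteq> q" "p \<in> verts K" "q \<in> verts K"
    using graph_edge_endpoints[OF assms(1,2)] by auto
  have R_iff: "(a, b) \<in> ?R \<longleftrightarrow> {a, b} \<in> edges K \<and> (a \<in> {p, q} \<longleftrightarrow> b \<in> {p, q})" for a b
    using edge_in_boundary_iff[OF assms(1), of a b "{p, q}"] by (auto simp: adj_def)
  have escape: "\<exists>r\<in>verts K. r \<noteq> v \<and> (v, r) \<in> ?R\<^sup>*" if v: "v \<in> verts K" for v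
  proof (cases "v \<in> {p, q}")
    case True
    have "(p, q) \<in> ?R" "(q, p) \<in> ?R"
      using assms(2) by (auto simp: R_iff insert_commute)
    then show ?thesis
      using True pq by (auto intro: r_into_rtrancl)
  next
    case False
    obtain r where r: "r \<in> nbrs K v" "r \<notin> {p, q}"
      using exists_nbr_notin_pair[OF assms(1)] deg v by metis
    then have "{v, r} \<in> edges K" "r \<in> verts K" "r \<noteq> v"
      using graph_edge_endpoints[OF assms(1)] by (auto simp: nbrs_def)
    then show ?thesis
      using False r(2) R_iff by (blast intro: r_into_rtrancl)
  qed
  obtain w where "w \<in> nbrs K p" "w \<notin> {p, q}"
    using exists_nbr_notin_pair[OF assms(1)] deg pq by metis
  then have "w \<in> verts K - {p, q}"
    using nbrs_subset[OF assms(1)] by blast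
  then have "\<not> connected (verts K, edges K - boundary K {p, q})"
    using pq by (intro not_connected_remove_boundary[OF assms(1), of p]) auto
  then show ?thesis
    using escape boundary_subset_edges by (simp add: restricted_edge_cut_def)
qed

lemma exists_restricted_edge_cut_le_min_edge_degree:
  assumes "graph K" "edges K \<noteq> {}" "\<forall>v\<in>verts K. 3 \<le> degree K v"
  obtains S where "restricted_edge_cut K S" "card S \<le> min_edge_degree K"
proof -
  obtain p q where pq: "{p, q} \<in> edges K" "min_edge_degree K = degree K p + degree K q - 2"
    using min_edge_degree_attained[OF assms(1,2)] by blast
  show ?thesis
    using that[OF restricted_edge_cut_boundary_edge[OF assms(1) pq(1) assms(3)]]
      card_boundary_edge_le[OF assms(1) pq(1)] pq(2) by simp
qed

lemma restricted_edge_conn_eqI: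
  assumes "restricted_edge_cut K S" "card S \<le> c" "\<And>S. restricted_edge_cut K S \<Longrightarrow> c \<le> card S"
  shows "restricted_edge_conn K = c"
proof (rule antisym)
  have "restricted_edge_conn K \<le> card S"
    unfolding restricted_edge_conn_def by (rule cInf_lower) (use assms(1) in auto)
  then show "restricted_edge_conn K \<le> c"
    using assms(2) by simp
  show "c \<le> restricted_edge_conn K"
    unfolding restricted_edge_conn_def
    using assms(1,3) by (intro cInf_greatest) auto
qed

section \<open>The strong product with a cycle\<close>

locale cycle_strong_product =
  fixes G :: "'a ugraph" and n :: nat
  assumes graph_G: "graph G" and three_le_n: "3 \<le> n"
begin

abbreviation "H \<equiv> strong_product G (cycle n)"

lemma verts_H: "verts H = verts G \<times> {..<n}"
  by (simp add: strong_product_def verts_cycle)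

lemma edge_H_iff:
  "{(x, i), (y, j)} \<in> edges H \<longleftrightarrow>
     x \<in> verts G \<and> y \<in> verts G \<and> i < n \<and> j < n \<and> (x, i) \<noteq> (y, j) \<and>
     (x = y \<or> {x, y} \<in> edges G) \<and> (i = j \<or> j = cyc_succ n i \<or> i = cyc_succ n j)"
proof -
  define C where "C x1 y1 x2 y2 \<longleftrightarrow> x1 \<in> verts G \<and> x2 \<in> verts G \<and> y1 < n \<and> y2 < n \<and>
    ((x1 = x2 \<and> {y1, y2} \<in> edges (cycle n)) \<or> (y1 = y2 \<and> {x1, x2} \<in> edges G) \<or>
     ({x1, x2} \<in> edges G \<and> {y1, y2} \<in> edges (cycle n)))" for x1 y1 x2 y2
  have C_sym: "C x1 y1 x2 y2 \<longleftrightarrow> C x2 y2 x1 y1" for x1 y1 x2 y2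
    unfolding C_def by (auto simp: insert_commute)
  have "{(x, i), (y, j)} \<in> edges H \<longleftrightarrow> C x i y j"
    using C_sym by (auto simp: strong_product_def verts_cycle C_def doubleton_eq_iff)
  also have "\<dots> \<longleftrightarrow> x \<in> verts G \<and> y \<in> verts G \<and> i < n \<and> j < n \<and> (x, i) \<noteq> (y, j) \<and>
     (x = y \<or> {x, y} \<in> edges G) \<and> (i = j \<or> j = cyc_succ n i \<or> i = cyc_succ n j)"
  proof -
    have "{i, j} \<in> edges (cycle n) \<longleftrightarrow> i < n \<and> j < n \<and> (j = cyc_succ n i \<or> i = cyc_succ n j)"
      using three_le_n by (intro edge_cycle_iff) simp
    moreover have "cyc_succ n k \<noteq> k" if "k < n" for k
      using three_le_n that cyc_succ_neq[of n k] by auto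
    ultimately show ?thesis
      using graph_edge_endpoints[OF graph_G, of x y] unfolding C_def by (auto; metis)
  qed
  finally show ?thesis .
qed

lemma edge_H_cases:
  assumes "f \<in> edges H"
  obtains x i y j where "f = {(x, i), (y, j)}"
  using assms by (auto simp: strong_product_def)

lemma graph_H: "graph H"
  unfolding graph_def
proof (intro conjI ballI)
  show "finite (verts H)"
    using finite_verts[OF graph_G] by (simp add: verts_H)
  fix f assume "f \<in> edges H"
  then obtain x i y j where "f = {(x, i), (y, j)}"
    by (rule edge_H_cases)
  then show "\<exists>p q. f = {p, q} \<and> p \<noteq> q \<and> p \<in> verts H \<and> q \<in> verts H"
    using \<open>f \<in> edges H\<close> by (auto simp: edge_H_iff verts_H)
qed

lemma nbrs_H_subset:
  assumes "x \<in> verts G" "j < n"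
  shows "nbrs H (x, j) \<subseteq> (insert x (nbrs G x) \<times> {cyc_pred n j, j, cyc_succ n j}) - {(x, j)}"
proof
  fix q assume "q \<in> nbrs H (x, j)"
  moreover obtain y k where "q = (y, k)" by fastforce
  ultimately have "{(x, j), (y, k)} \<in> edges H" by (simp add: nbrs_def)
  then show "q \<in> (insert x (nbrs G x) \<times> {cyc_pred n j, j, cyc_succ n j}) - {(x, j)}"
    using \<open>q = (y, k)\<close> cyc_pred_succ[of k n] by (auto simp: edge_H_iff nbrs_def)
qed

lemma degree_H_le:
  assumes "x \<in> verts G" "j < n"
  shows "degree H (x, j) \<le> 3 * degree G x + 2"
proof -
  let ?A = "insert x (nbrs G x)" and ?T = "{cyc_pred n j, j, cyc_succ n j}"
  have fin: "finite (?A \<times> ?T)"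
    using finite_nbrs[OF graph_G] by simp
  have "degree H (x, j) \<le> card (?A \<times> ?T - {(x, j)})"
    unfolding card_nbrs[OF graph_H, symmetric]
    using fin nbrs_H_subset[OF assms] by (intro card_mono) auto
  also have "\<dots> = card (?A \<times> ?T) - 1"
    using fin by (intro card_Diff_singleton) auto
  also have "\<dots> = card ?A * card ?T - 1"
    by (simp only: card_cartesian_product)
  also have "\<dots> \<le> (degree G x + 1) * 3 - 1"
    using finite_nbrs[OF graph_G] card_insert_le_m1[of 3 "{j, cyc_succ n j}"]
    by (intro diff_le_mono mult_le_mono)
       (auto simp: card_nbrs[OF graph_G] card_insert_if)
  finally show ?thesis by simp
qed

lemma three_le_degree_H:
  assumes "connected G" "2 \<le> card (verts G)" "p \<in> verts H"
  shows "3 \<le> degree H p"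
proof -
  obtain x j where p: "p = (x, j)" "x \<in> verts G" "j < n"
    using assms(3) by (auto simp: verts_H)
  obtain y where y: "{x, y} \<in> edges G"
    using connected_nbrs_nonempty[OF assms(1,2) p(2)] by (auto simp: nbrs_def)
  have neq: "cyc_succ n j \<noteq> j" "cyc_pred n j \<noteq> j" "cyc_pred n j \<noteq> cyc_succ n j" "x \<noteq> y"
    using three_le_n p cyc_succ_neq cyc_pred_neq cyc_pred_neq_succ graph_edge_endpoints[OF graph_G y]
    by auto
  have "{(x, cyc_succ n j), (x, cyc_pred n j), (y, j)} \<subseteq> nbrs H p"
    using p y neq graph_edge_endpoints[OF graph_G y] three_le_n
      cyc_succ_less[of n j] cyc_pred_less[of j n] cyc_succ_pred[of j n]
    by (auto simp: nbrs_def edge_H_iff)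
  then have "card {(x, cyc_succ n j), (x, cyc_pred n j), (y, j)} \<le> degree H p"
    unfolding card_nbrs[OF graph_H, symmetric] using finite_nbrs[OF graph_H] by (rule card_mono[rotated])
  then show ?thesis
    using neq by simp
qed

lemma vertical_edge_H: "x \<in> verts G \<Longrightarrow> {(x, 0), (x, 1)} \<in> edges H"
  using three_le_n by (simp add: edge_H_iff cyc_succ_def)

lemma min_edge_degree_H_le:
  assumes "verts G \<noteq> {}"
  shows "min_edge_degree H \<le> 6 * min_degree G + 2"
proof -
  obtain x where x: "x \<in> verts G" "degree G x = min_degree G"
    using min_degree_attained[OF graph_G assms] .
  have "min_edge_degree H \<le> degree H (x, 0) + degree H (x, 1) - 2"
    by (rule min_edge_degree_le[OF graph_H vertical_edge_H[OF x(1)]])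
  moreover have "degree H (x, 0) \<le> 3 * degree G x + 2" "degree H (x, 1) \<le> 3 * degree G x + 2"
    using degree_H_le[OF x(1), of 0] degree_H_le[OF x(1), of 1] three_le_n by simp_all
  ultimately show ?thesis
    using x(2) by linarith
qed

(* The boundary edges of X that project to e: for e = {x} they lie inside the column {x} \<times> C_n,
   for an edge e = {a, b} of G they join the columns of a and b. *)
definition cut_over :: "('a \<times> nat) set \<Rightarrow> 'a set \<Rightarrow> ('a \<times> nat) set set" where
  "cut_over X e = {f \<in> boundary H X. fst ` f = e}"

lemma sum_card_cut_over_le:
  assumes "finite F"
  shows "(\<Sum>e\<in>F. card (cut_over X e)) \<le> card (boundary H X)"
proof -
  have fin: "finite (cut_over X e)" for e
    using finite_boundary[OF graph_H] by (simp add: cut_over_def)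
  have "(\<Sum>e\<in>F. card (cut_over X e)) = card (\<Union>e\<in>F. cut_over X e)"
    using assms fin by (intro card_UN_disjoint[symmetric]) (auto simp: cut_over_def)
  also have "\<dots> \<le> card (boundary H X)"
    using finite_boundary[OF graph_H] by (intro card_mono) (auto simp: cut_over_def)
  finally show ?thesis .
qed

lemma in_cut_over:
  assumes "{(a, i), (b, j)} \<in> edges H" "((a, i) \<in> X) \<noteq> ((b, j) \<in> X)"
  shows "{(a, i), (b, j)} \<in> cut_over X {a, b}"
  using assms edge_in_boundary_iff[OF graph_H assms(1)] by (simp add: cut_over_def)

lemma cyc_changes_le_card_cut_over:
  assumes "x \<in> verts G"
  shows "cyc_changes n (\<lambda>i. (x, i) \<in> X) \<le> card (cut_over X {x})"
proof -
  let ?K = "{i \<in> {..<n}. ((x, i) \<in> X) \<noteq> ((x, cyc_succ n i) \<in> X)}"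
  let ?f = "\<lambda>i. {(x, i), (x, cyc_succ n i)}"
  have "cyc_changes n (\<lambda>i. (x, i) \<in> X) = card ?K"
    by (simp add: cyc_changes_def Int_def)
  also have "\<dots> = card (?f ` ?K)"
    using three_le_n cyc_succ_succ_neq[of n]
    by (intro card_image[symmetric] inj_onI) (auto simp: doubleton_eq_iff)
  also have "\<dots> \<le> card (cut_over X {x})"
  proof (intro card_mono)
    show "finite (cut_over X {x})"
      using finite_boundary[OF graph_H] by (simp add: cut_over_def)
    show "?f ` ?K \<subseteq> cut_over X {x}"
      using assms three_le_n cyc_succ_less[of n] cyc_succ_neq[of n]
      by (force intro: in_cut_over[of x _ x, simplified] simp: edge_H_iff)
  qed
  finally show ?thesis .
qed

lemma cross_disagreements_le_card_cut_over:
  assumes ab: "{a, b} \<in> edges G"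
  shows "cross_disagreements n (\<lambda>i. (a, i) \<in> X) (\<lambda>i. (b, i) \<in> X) \<le> card (cut_over X {a, b})"
proof -
  let ?D = "\<lambda>i j. ((a, i) \<in> X) \<noteq> ((b, j) \<in> X)"
  let ?K = "SIGMA i:{..<n}. {j \<in> {cyc_pred n i, i, cyc_succ n i}. ?D i j}"
  let ?f = "\<lambda>(i, j). {(a, i), (b, j)}"
  have "card {j \<in> {cyc_pred n i, i, cyc_succ n i}. ?D i j}
      = of_bool (?D i (cyc_pred n i)) + of_bool (?D i i) + of_bool (?D i (cyc_succ n i))"
    if "i < n" for i
    using that three_le_n cyc_pred_neq[of n i] cyc_succ_neq[of n i] cyc_pred_neq_succ[of n i]
    by (intro card_filter_triple) auto
  then have "cross_disagreements n (\<lambda>i. (a, i) \<in> X) (\<lambda>i. (b, i) \<in> X) = card ?K"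
    by (simp add: cross_disagreements_def)
  also have "\<dots> = card (?f ` ?K)"
    using graph_edge_endpoints(1)[OF graph_G ab]
    by (intro card_image[symmetric] inj_onI) (auto simp: doubleton_eq_iff)
  also have "\<dots> \<le> card (cut_over X {a, b})"
  proof (intro card_mono)
    show "finite (cut_over X {a, b})"
      using finite_boundary[OF graph_H] by (simp add: cut_over_def)
    have "{(a, i), (b, j)} \<in> edges H" if "i < n" "j \<in> {cyc_pred n i, i, cyc_succ n i}" for i j
      using that ab graph_edge_endpoints[OF graph_G ab] three_le_n
        cyc_pred_less[of i n] cyc_succ_less[of n i] cyc_succ_pred[of i n]
      by (auto simp: edge_H_iff)
    then show "?f ` ?K \<subseteq> cut_over X {a, b}"
      by (auto intro: in_cut_over)
  qed
  finally show ?thesis .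
qed

lemma two_le_card_cut_over_vertex:
  assumes "x \<in> verts G" "a < n" "(x, a) \<in> X" "b < n" "(x, b) \<notin> X"
  shows "2 \<le> card (cut_over X {x})"
  using two_le_cyc_changes[of a n b "\<lambda>i. (x, i) \<in> X"] assms
    cyc_changes_le_card_cut_over[OF assms(1), of X] by linarith

lemma four_le_card_cut_over_edge:
  assumes "{x, z} \<in> edges G"
    and "p < n" "(x, p) \<in> X" "p' < n" "(x, p') \<notin> X" "q < n" "(z, q) \<in> X" "q' < n" "(z, q') \<notin> X"
  shows "4 \<le> card (cut_over X {x, z})"
  using four_le_cross_disagreements[OF three_le_n, of p "\<lambda>i. (x, i) \<in> X" p' q "\<lambda>i. (z, i) \<in> X" q']
    assms cross_disagreements_le_card_cut_over[OF assms(1), of X] by simp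

lemma card_cut_over_edge_to_empty_column:
  assumes "{x, z} \<in> edges G" "\<forall>j<n. (z, j) \<notin> X"
  shows "3 * card {i. i < n \<and> (x, i) \<in> X} \<le> card (cut_over X {x, z})"
  using cross_disagreements_le_card_cut_over[OF assms(1), of X]
    cross_disagreements_empty[of n "\<lambda>i. (z, i) \<in> X" "\<lambda>i. (x, i) \<in> X"] assms(2) by simp

lemma three_le_card_cut_over_edge:
  assumes "{x, z} \<in> edges G" "i < n" "(x, i) \<in> X" "i' < n" "(x, i') \<notin> X" "\<exists>j<n. (z, j) \<notin> X"
  shows "3 \<le> card (cut_over X {x, z})"
proof (cases "\<exists>j<n. (z, j) \<in> X")
  case True
  then obtain q q' where "q < n" "(z, q) \<in> X" "q' < n" "(z, q') \<notin> X"
    using assms(6) by blast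
  then show ?thesis
    using four_le_card_cut_over_edge[OF assms(1-5)] by fastforce
next
  case False
  have "card {i} \<le> card {i. i < n \<and> (x, i) \<in> X}"
    using assms(2,3) by (intro card_mono) auto
  then show ?thesis
    using card_cut_over_edge_to_empty_column[OF assms(1), of X] False by simp
qed

lemma sum_card_cut_over_star:
  "(\<Sum>e\<in>(\<lambda>z. {x, z}) ` Z. card (cut_over X e)) = (\<Sum>z\<in>Z. card (cut_over X {x, z}))"
  by (rule sum.reindex_cong[OF _ refl refl]) (auto intro: inj_onI simp: doubleton_eq_iff)

lemma card_boundary_ge_isolated_column:
  assumes no_iso: "no_isolated_vertex H X"
    and x: "x \<in> verts G" "i < n" "(x, i) \<in> X" "i' < n" "(x, i') \<notin> X"
    and empty: "\<forall>z\<in>nbrs G x. \<forall>j<n. (z, j) \<notin> X"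
  shows "6 * degree G x + 2 \<le> card (boundary H X)"
proof -
  obtain y j where yj: "(y, j) \<in> X" "{(x, i), (y, j)} \<in> edges H"
    using no_iso x unfolding no_isolated_vertex_def by fastforce
  then have "y = x" "j \<noteq> i" "j < n"
    using empty by (auto simp: edge_H_iff nbrs_def)
  then have "card {i, j} \<le> card {k. k < n \<and> (x, k) \<in> X}"
    using x yj by (intro card_mono) auto
  then have six: "6 \<le> card (cut_over X {x, z})" if "z \<in> nbrs G x" for z
    using card_cut_over_edge_to_empty_column[of x z X] that empty \<open>j \<noteq> i\<close>
    by (simp add: nbrs_def)
  have "{x} \<notin> (\<lambda>z. {x, z}) ` nbrs G x"
    using self_notin_nbrs[OF graph_G, of x] by (auto simp: doubleton_eq_iff)
  then have "(\<Sum>e\<in>insert {x} ((\<lambda>z. {x, z}) ` nbrs G x). card (cut_over X e))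
      = card (cut_over X {x}) + (\<Sum>z\<in>nbrs G x. card (cut_over X {x, z}))"
    using finite_nbrs[OF graph_G] by (simp add: sum_card_cut_over_star)
  moreover have "6 * degree G x \<le> (\<Sum>z\<in>nbrs G x. card (cut_over X {x, z}))"
    using sum_mono[of "nbrs G x" "\<lambda>_. 6 :: nat" "\<lambda>z. card (cut_over X {x, z})"] six
    by (simp add: card_nbrs[OF graph_G])
  moreover have "(\<Sum>e\<in>insert {x} ((\<lambda>z. {x, z}) ` nbrs G x). card (cut_over X e))
      \<le> card (boundary H X)"
    using finite_nbrs[OF graph_G] by (intro sum_card_cut_over_le) simp
  ultimately show ?thesis
    using two_le_card_cut_over_vertex[OF x] by linarith
qed

lemma sum_card_cut_over_star_ge:
  assumes "Z \<subseteq> nbrs G x" and no_full: "\<forall>v\<in>verts G. \<exists>j<n. (v, j) \<notin> X"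
    and "i < n" "(x, i) \<in> X" "i' < n" "(x, i') \<notin> X"
  shows "3 * card Z \<le> (\<Sum>z\<in>Z. card (cut_over X {x, z}))"
proof -
  have "3 \<le> card (cut_over X {x, z})" if "z \<in> Z" for z
  proof -
    have xz: "{x, z} \<in> edges G" and "z \<in> verts G"
      using that assms(1) nbrs_subset[OF graph_G] by (auto simp: nbrs_def)
    then have "\<exists>j<n. (z, j) \<notin> X"
      using no_full by simp
    then show ?thesis
      by (rule three_le_card_cut_over_edge[OF xz assms(3-6)])
  qed
  then show ?thesis
    using sum_mono[of Z "\<lambda>_. 3 :: nat" "\<lambda>z. card (cut_over X {x, z})"] by simp
qed

lemma sum_card_cut_over_two_stars_le:
  assumes xy: "{x, y} \<in> edges G"
  shows "card (cut_over X {x}) + card (cut_over X {y})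
      + (\<Sum>z\<in>nbrs G x. card (cut_over X {x, z})) + (\<Sum>z\<in>nbrs G y - {x}. card (cut_over X {y, z}))
    \<le> card (boundary H X)"
proof -
  let ?A = "(\<lambda>z. {x, z}) ` nbrs G x" and ?B = "(\<lambda>z. {y, z}) ` (nbrs G y - {x})"
  have fin: "finite ?A" "finite ?B"
    using finite_nbrs[OF graph_G] by auto
  have "x \<noteq> y"
    using graph_edge_endpoints[OF graph_G xy] by simp
  then have disjoint: "{{x}, {y}} \<inter> (?A \<union> ?B) = {}" "?A \<inter> ?B = {}"
    using self_notin_nbrs[OF graph_G] by (auto simp: doubleton_eq_iff)
  have "(\<Sum>e\<in>{{x}, {y}} \<union> (?A \<union> ?B). card (cut_over X e))
      = (\<Sum>e\<in>{{x}, {y}}. card (cut_over X e)) + (\<Sum>e\<in>?A \<union> ?B. card (cut_over X e))"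
    by (rule sum.union_disjoint) (use disjoint fin in auto)
  moreover have "(\<Sum>e\<in>?A \<union> ?B. card (cut_over X e))
      = (\<Sum>e\<in>?A. card (cut_over X e)) + (\<Sum>e\<in>?B. card (cut_over X e))"
    by (rule sum.union_disjoint) (use disjoint fin in auto)
  moreover have "(\<Sum>e\<in>{{x}, {y}}. card (cut_over X e)) = card (cut_over X {x}) + card (cut_over X {y})"
    using \<open>x \<noteq> y\<close> by simp
  moreover have "(\<Sum>e\<in>{{x}, {y}} \<union> (?A \<union> ?B). card (cut_over X e)) \<le> card (boundary H X)"
    using fin by (intro sum_card_cut_over_le) simp
  ultimately show ?thesis
    by (simp add: sum_card_cut_over_star)
qed

lemma card_boundary_ge_adjacent_columns:
  assumes xy: "{x, y} \<in> edges G" and no_full: "\<forall>v\<in>verts G. \<exists>j<n. (v, j) \<notin> X"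
    and x: "i < n" "(x, i) \<in> X" and y: "j < n" "(y, j) \<in> X"
  shows "3 * degree G x + 3 * degree G y + 2 \<le> card (boundary H X)"
proof -
  have V: "x \<in> verts G" "y \<in> verts G"
    using graph_edge_endpoints[OF graph_G xy] by auto
  obtain i' j' where x': "i' < n" "(x, i') \<notin> X" and y': "j' < n" "(y, j') \<notin> X"
    using no_full V by meson
  have nbrs: "y \<in> nbrs G x" "x \<in> nbrs G y"
    using xy by (auto simp: nbrs_def insert_commute)
  have fin: "finite (nbrs G v)" for v
    using finite_nbrs[OF graph_G] .
  have "4 + 3 * (degree G x - 1) \<le> (\<Sum>z\<in>nbrs G x. card (cut_over X {x, z}))"
    using four_le_card_cut_over_edge[OF xy x x' y y']
      sum_card_cut_over_star_ge[of "nbrs G x - {y}" x, OF _ no_full x x']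
      sum.remove[OF fin nbrs(1), of "\<lambda>z. card (cut_over X {x, z})"] nbrs(1) fin
    by (simp add: card_nbrs[OF graph_G])
  moreover have "3 * (degree G y - 1) \<le> (\<Sum>z\<in>nbrs G y - {x}. card (cut_over X {y, z}))"
    using sum_card_cut_over_star_ge[of "nbrs G y - {x}" y, OF _ no_full y y'] nbrs(2) fin
    by (simp add: card_nbrs[OF graph_G])
  moreover have "1 \<le> degree G x" "1 \<le> degree G y"
    using nbrs fin card_mono[of "nbrs G x" "{y}"] card_mono[of "nbrs G y" "{x}"]
    by (simp_all add: card_nbrs[OF graph_G, symmetric])
  ultimately show ?thesis
    using two_le_card_cut_over_vertex[OF V(1) x x'] two_le_card_cut_over_vertex[OF V(2) y y']
      sum_card_cut_over_two_stars_le[OF xy, of X] by linarith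
qed

lemma card_boundary_ge_no_full_column:
  assumes "X \<subseteq> verts H" "X \<noteq> {}" "no_isolated_vertex H X"
    and no_full: "\<forall>v\<in>verts G. \<exists>j<n. (v, j) \<notin> X"
  shows "6 * min_degree G + 2 \<le> card (boundary H X)"
proof -
  obtain x i where x: "x \<in> verts G" "i < n" "(x, i) \<in> X"
    using assms(1,2) by (auto simp: verts_H)
  obtain i' where x': "i' < n" "(x, i') \<notin> X"
    using no_full x(1) by blast
  show ?thesis
  proof (cases "\<exists>y\<in>nbrs G x. \<exists>j<n. (y, j) \<in> X")
    case True
    then obtain y j where y: "y \<in> nbrs G x" "j < n" "(y, j) \<in> X"
      by blast
    then have "{x, y} \<in> edges G" "y \<in> verts G"
      using nbrs_subset[OF graph_G] by (auto simp: nbrs_def)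
    then show ?thesis
      using card_boundary_ge_adjacent_columns[OF _ no_full x(2,3) y(2,3)]
        min_degree_le[OF graph_G x(1)] min_degree_le[OF graph_G] by fastforce
  next
    case False
    then show ?thesis
      using card_boundary_ge_isolated_column[OF assms(3) x x'] min_degree_le[OF graph_G x(1)]
      by fastforce
  qed
qed

definition layer :: "('a \<times> nat) set \<Rightarrow> nat \<Rightarrow> 'a set" where
  "layer X i = {a. (a, i) \<in> X}"

lemma layer_boundaries_le_card_cut_over:
  assumes "e \<in> edges G"
  shows "(\<Sum>i<n. of_bool (e \<in> boundary G (layer X i))
      + of_bool (e \<in> boundary G (layer X i \<inter> layer X (cyc_succ n i)))
      + of_bool (e \<in> boundary G (layer X i \<union> layer X (cyc_succ n i))))
    \<le> card (cut_over X e)"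
proof -
  obtain a b where e: "e = {a, b}"
    using graph_edgeE[OF graph_G assms] by metis
  let ?P = "\<lambda>i. (a, i) \<in> X" and ?Q = "\<lambda>i. (b, i) \<in> X"
  have "(\<Sum>i<n. of_bool (e \<in> boundary G (layer X i))
      + of_bool (e \<in> boundary G (layer X i \<inter> layer X (cyc_succ n i)))
      + of_bool (e \<in> boundary G (layer X i \<union> layer X (cyc_succ n i))))
    = (\<Sum>i<n. of_bool (?P i \<noteq> ?Q i)
      + of_bool ((?P i \<and> ?P (cyc_succ n i)) \<noteq> (?Q i \<and> ?Q (cyc_succ n i)))
      + of_bool ((?P i \<or> ?P (cyc_succ n i)) \<noteq> (?Q i \<or> ?Q (cyc_succ n i))))"
    using assms unfolding e by (simp add: edge_in_boundary_iff[OF graph_G] layer_def)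
  also have "\<dots> \<le> cross_disagreements n ?P ?Q"
    by (rule layer_disagreements_le_cross_disagreements)
  also have "\<dots> \<le> card (cut_over X e)"
    using assms unfolding e by (rule cross_disagreements_le_card_cut_over)
  finally show ?thesis .
qed

lemma card_boundary_ge_full_columns:
  assumes u: "u \<in> verts G" "\<forall>i<n. (u, i) \<in> X" and w: "w \<in> verts G" "\<forall>i<n. (w, i) \<notin> X"
  shows "3 * n * edge_conn G \<le> card (boundary H X)"
proof -
  let ?L = "layer X" and ?s = "cyc_succ n"
  let ?c = "\<lambda>Z e. of_bool (e \<in> boundary G Z) :: nat"
  have conn: "edge_conn G \<le> card (boundary G Z)"
    if "Z \<in> {?L i, ?L i \<inter> ?L (?s i), ?L i \<union> ?L (?s i)}" "i < n" for Z i
    using that u w cyc_succ_less[of n i] three_le_n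
    by (intro edge_conn_le_card_boundary[OF graph_G, of u _ w]) (auto simp: layer_def)
  have "3 * edge_conn G \<le> card (boundary G (?L i)) + card (boundary G (?L i \<inter> ?L (?s i)))
      + card (boundary G (?L i \<union> ?L (?s i)))" if "i < n" for i
    using conn[of "?L i" i] conn[of "?L i \<inter> ?L (?s i)" i] conn[of "?L i \<union> ?L (?s i)" i] that
    by simp
  then have "n * (3 * edge_conn G)
      \<le> (\<Sum>i<n. card (boundary G (?L i)) + card (boundary G (?L i \<inter> ?L (?s i)))
                + card (boundary G (?L i \<union> ?L (?s i))))"
    using sum_mono[of "{..<n}" "\<lambda>_. 3 * edge_conn G"] by simp
  then have "3 * n * edge_conn G
      \<le> (\<Sum>i<n. card (boundary G (?L i)) + card (boundary G (?L i \<inter> ?L (?s i)))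
                + card (boundary G (?L i \<union> ?L (?s i))))"
    by (simp add: algebra_simps)
  also have "\<dots> = (\<Sum>i<n. \<Sum>e\<in>edges G. ?c (?L i) e + ?c (?L i \<inter> ?L (?s i)) e
                                    + ?c (?L i \<union> ?L (?s i)) e)"
    by (simp only: card_boundary_eq_sum[OF graph_G] sum.distrib)
  also have "\<dots> = (\<Sum>e\<in>edges G. \<Sum>i<n. ?c (?L i) e + ?c (?L i \<inter> ?L (?s i)) e
                                    + ?c (?L i \<union> ?L (?s i)) e)"
    by (rule sum.swap)
  also have "\<dots> \<le> (\<Sum>e\<in>edges G. card (cut_over X e))"
    by (intro sum_mono layer_boundaries_le_card_cut_over)
  also have "\<dots> \<le> card (boundary H X)"
    using finite_edges[OF graph_G] by (rule sum_card_cut_over_le)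
  finally show ?thesis .
qed

lemma card_boundary_H_ge:
  assumes lambda: "6 * min_degree G + 2 \<le> 3 * n * edge_conn G"
    and X: "X \<subseteq> verts H" "X \<noteq> {}" "verts H - X \<noteq> {}"
    and no_iso: "no_isolated_vertex H X" "no_isolated_vertex H (verts H - X)"
  shows "6 * min_degree G + 2 \<le> card (boundary H X)"
proof (cases "\<forall>v\<in>verts G. \<exists>j<n. (v, j) \<notin> X")
  case True
  then show ?thesis
    using card_boundary_ge_no_full_column[OF X(1,2) no_iso(1)] by blast
next
  case False
  then obtain u where u: "u \<in> verts G" "\<forall>i<n. (u, i) \<in> X"
    by blast
  show ?thesis
  proof (cases "\<forall>v\<in>verts G. \<exists>j<n. (v, j) \<in> X")
    case True
    then have "\<forall>v\<in>verts G. \<exists>j<n. (v, j) \<notin> verts H - X"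
      by blast
    then show ?thesis
      using card_boundary_ge_no_full_column[OF _ X(3) no_iso(2)] boundary_Diff[OF graph_H] by simp
  next
    case False
    then obtain w where "w \<in> verts G" "\<forall>i<n. (w, i) \<notin> X"
      by blast
    then show ?thesis
      using card_boundary_ge_full_columns[OF u] lambda by fastforce
  qed
qed

lemma card_restricted_edge_cut_H_ge:
  assumes "verts G \<noteq> {}" "6 * min_degree G + 2 \<le> 3 * n * edge_conn G"
    and cut: "restricted_edge_cut H S"
  shows "6 * min_degree G + 2 \<le> card S"
proof -
  have "verts H \<noteq> {}"
    using assms(1) three_le_n by (auto simp: verts_H lessThan_empty_iff)
  then obtain X where X: "X \<subseteq> verts H" "X \<noteq> {}" "verts H - X \<noteq> {}" "boundary H X \<subseteq> S"
    "no_isolated_vertex H X" "no_isolated_vertex H (verts H - X)"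
    using restricted_edge_cut_boundary[OF graph_H _ cut] by blast
  have "finite S"
    using cut finite_edges[OF graph_H] finite_subset by (auto simp: restricted_edge_cut_def)
  then have "card (boundary H X) \<le> card S"
    using X(4) by (rule card_mono)
  then show ?thesis
    using card_boundary_H_ge[OF assms(2) X(1-3,5,6)] by linarith
qed

end

theorem corollary3p5:
  fixes G :: "'a ugraph" and n :: nat
  assumes "graph G" and "connected G" and "card (verts G) \<ge> 2" and "n \<ge> 3"
    and "min (3 * n * edge_conn G) (2 * (card (verts G) + 2 * card (edges G)))
           \<ge> 6 * min_degree G + 2"
  shows "max_restricted_edge_connected (strong_product G (cycle n))"
proof -
  interpret cycle_strong_product G n
    using assms(1,4) by unfold_locales
  have V: "verts G \<noteq> {}"
    using assms(3) by auto
  \<comment> \<open>only the edge-connectivity part of the hypothesis is needed\<close>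
  have lambda: "6 * min_degree G + 2 \<le> 3 * n * edge_conn G"
    using assms(5) by simp
  have "edges H \<noteq> {}"
    using V vertical_edge_H by blast
  obtain S where "restricted_edge_cut H S" "card S \<le> min_edge_degree H"
    using exists_restricted_edge_cut_le_min_edge_degree[OF graph_H \<open>edges H \<noteq> {}\<close>]
      three_le_degree_H[OF assms(2,3)] by blast
  then have "restricted_edge_conn H = min_edge_degree H"
    using min_edge_degree_H_le[OF V] card_restricted_edge_cut_H_ge[OF V lambda]
    by (intro restricted_edge_conn_eqI) (auto intro: le_trans)
  then show ?thesis
    by (simp add: max_restricted_edge_connected_def)
qed

end
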